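(* Let $n,d$ be positive integers and let $M=M^i_{j,t}$ be an indecomposable non-projective $A_n^{dn}$-module. The following are equivalent: (1) $\underline{\mathrm{Hom}}(M,M)\cong k$, i.e. $M$ is a stable brick; (2) $\ell(M)\le n$ or $(d-1)n+1\le\ell(M)\le dn$; (3) $t=0$ or $t=d-1$.
   Context: $A_n^{dn}=kQ/I$ ($k$ algebraically closed), $Q$ the cyclic quiver with vertices $1,\dots,n$ and arrows $i\to i+1$, $n\to1$, $I$ generated by all paths of length $dn+1$ (a symmetric Nakayama algebra). $M^i_{j,t}$ denotes the indecomposable (uniserial) module with top $S_i$, socle $S_j$, in which $S_i$ occurs exactly $t+1$ times as a composition factor; $\ell(M)$ is its number of composition factors. $\underline{\mathrm{Hom}}$ is Hom modulo morphisms factoring through projectives. *)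

theory Defs
  imports "Jordan_Normal_Form.Matrix" "HOL-Computational_Algebra.Polynomial"
begin

text \<open>Finite-dimensional representations of the bound quiver (Q, I) defining A_n^{dn}
over a field 'k, realised concretely on k^m (column vectors).  Vertices of the cyclic
quiver are 0, ..., n-1 (the paper's vertex v+1 is our v); the arrow starting at v
goes to (v+1) mod n.  A module is given by its dimension, the action of the trivial
paths (orthogonal idempotents) and the action of the arrows.\<close>

record 'k rep =
  rdim :: nat
  ridem :: "nat \<Rightarrow> 'k mat"
  rarr :: "nat \<Rightarrow> 'k mat"

fun idem_sum :: "nat \<Rightarrow> (nat \<Rightarrow> 'k::field mat) \<Rightarrow> nat \<Rightarrow> 'k mat" where
  "idem_sum m E 0 = 0\<^sub>m m m"
| "idem_sum m E (Suc v) = idem_sum m E v + E v"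

fun path_act :: "nat \<Rightarrow> 'k::field rep \<Rightarrow> nat \<Rightarrow> nat \<Rightarrow> 'k mat" where
  "path_act n M v 0 = ridem M v"
| "path_act n M v (Suc L) = rarr M ((v + L) mod n) * path_act n M v L"

definition is_module :: "nat \<Rightarrow> nat \<Rightarrow> 'k::field rep \<Rightarrow> bool" where
  "is_module n d M \<longleftrightarrow>
     (\<forall>v<n. ridem M v \<in> carrier_mat (rdim M) (rdim M)
          \<and> rarr M v \<in> carrier_mat (rdim M) (rdim M))
   \<and> (\<forall>v<n. \<forall>w<n. ridem M v * ridem M w = (if v = w then ridem M v else 0\<^sub>m (rdim M) (rdim M)))
   \<and> idem_sum (rdim M) (ridem M) n = 1\<^sub>m (rdim M)
   \<and> (\<forall>v<n. rarr M v = ridem M ((v + 1) mod n) * rarr M v * ridem M v)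
   \<and> (\<forall>v<n. path_act n M v (d * n + 1) = 0\<^sub>m (rdim M) (rdim M))"

definition is_hom :: "nat \<Rightarrow> 'k::field rep \<Rightarrow> 'k rep \<Rightarrow> 'k mat \<Rightarrow> bool" where
  "is_hom n M N f \<longleftrightarrow> f \<in> carrier_mat (rdim N) (rdim M)
     \<and> (\<forall>v<n. f * ridem M v = ridem N v * f \<and> f * rarr M v = rarr N v * f)"

definition is_surj_hom :: "nat \<Rightarrow> 'k::field rep \<Rightarrow> 'k rep \<Rightarrow> 'k mat \<Rightarrow> bool" where
  "is_surj_hom n M N f \<longleftrightarrow> is_hom n M N f
     \<and> (\<forall>y \<in> carrier_vec (rdim N). \<exists>x \<in> carrier_vec (rdim M). f *\<^sub>v x = y)"

definition projective :: "nat \<Rightarrow> nat \<Rightarrow> 'k::field rep \<Rightarrow> bool" where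
  "projective n d P \<longleftrightarrow> is_module n d P \<and>
     (\<forall>N L g h. is_module n d N \<and> is_module n d L \<and> is_surj_hom n N L g \<and> is_hom n P L h
        \<longrightarrow> (\<exists>h'. is_hom n P N h' \<and> g * h' = h))"

definition factors_through_proj :: "nat \<Rightarrow> nat \<Rightarrow> 'k::field rep \<Rightarrow> 'k rep \<Rightarrow> 'k mat \<Rightarrow> bool" where
  "factors_through_proj n d M N f \<longleftrightarrow>
     (\<exists>(P :: 'k rep) g h. projective n d P \<and> is_hom n M P g \<and> is_hom n P N h \<and> f = h * g)"

text \<open>Stable brick: the stable endomorphism algebra is isomorphic to k, i.e. it is
spanned by the class of the identity and that class is nonzero.\<close>
definition stable_brick :: "nat \<Rightarrow> nat \<Rightarrow> 'k::field rep \<Rightarrow> bool" where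
  "stable_brick n d M \<longleftrightarrow>
     (\<forall>f. is_hom n M M f \<longrightarrow> (\<exists>c. factors_through_proj n d M M (f - c \<cdot>\<^sub>m 1\<^sub>m (rdim M))))
   \<and> \<not> factors_through_proj n d M M (1\<^sub>m (rdim M))"

text \<open>Uniserial module with top at vertex i and l composition factors: basis
b_0, ..., b_(l-1), b_s at vertex (i+s) mod n, the arrow sends b_s to b_(s+1)
(and b_(l-1) to 0).\<close>
definition uniserial :: "nat \<Rightarrow> nat \<Rightarrow> nat \<Rightarrow> 'k::field rep" where
  "uniserial n i l = \<lparr> rdim = l,
     ridem = (\<lambda>v. mat l l (\<lambda>(r, s). if r = s \<and> (i + s) mod n = v then 1 else 0)),
     rarr = (\<lambda>v. mat l l (\<lambda>(r, s). if r = s + 1 \<and> (i + s) mod n = v then 1 else 0)) \<rparr>"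

text \<open>Number of composition factors of M^i_{j,t}: top S_i, socle S_j, S_i occurring t+1 times.\<close>
definition Mlen :: "nat \<Rightarrow> nat \<Rightarrow> nat \<Rightarrow> nat \<Rightarrow> nat" where
  "Mlen n i j t = t * n + (j + n - i) mod n + 1"

definition Mmod :: "nat \<Rightarrow> nat \<Rightarrow> nat \<Rightarrow> nat \<Rightarrow> 'k::field rep" where
  "Mmod n i j t = uniserial n i (Mlen n i j t)"

text \<open>Length (number of composition factors); all simples are 1-dimensional.\<close>
definition ell :: "'k rep \<Rightarrow> nat" where
  "ell M = rdim M"

end

theory Submission
  imports Defs
begin

text \<open>Write U(i, l) for the uniserial module with top at vertex i and basis b_0, ..., b_(l-1).
A homomorphism from U(i, l) to a module N is determined by the image x of b_0, and every x
killed by the paths of length l starting at i gives one, sending b_s to the image of x under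
the path of length s.  The module U(i, dn+1) is projective and maps onto U(i, l), so an
endomorphism F of U(i, l) factors through a projective iff it lifts along this epimorphism,
which happens iff F b_0 has no component b_r with r + l \<le> dn.  The endomorphisms of U(i, l)
are spanned by the maps b_0 to b_(kn) with kn < l, and those with k \<ge> 1 all factor through a
projective iff n + l > dn or l \<le> n.  Hence U(i, l) is a stable brick iff l \<le> n or
dn < l + n; writing l = tn + r + 1 with r < n, this means t = 0 or t = d - 1.\<close>

lemma zero_mat_mult_vec [simp]:
  fixes x :: "'a::semiring_0 vec"
  assumes "x \<in> carrier_vec k"
  shows "0\<^sub>m a k *\<^sub>v x = 0\<^sub>v a"
  using assms by (intro eq_vecI) (auto simp: scalar_prod_def)

lemma mult_mat_zero_vec [simp]:
  fixes f :: "'a::semiring_0 mat"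
  assumes "f \<in> carrier_mat a k"
  shows "f *\<^sub>v 0\<^sub>v k = 0\<^sub>v a"
  using assms by (intro eq_vecI) (auto simp: scalar_prod_def)

lemma mult_unit_vec_eq_col:
  fixes f :: "'a::semiring_1 mat"
  assumes "f \<in> carrier_mat a m" "s < m"
  shows "f *\<^sub>v unit_vec m s = col f s"
  using assms by (intro eq_vecI) auto

section \<open>Modules over the truncated cyclic path algebra\<close>

lemma is_hom_carrier: "is_hom n M N f \<Longrightarrow> f \<in> carrier_mat (rdim N) (rdim M)"
  unfolding is_hom_def by simp

lemma module_carrier:
  assumes "is_module n d N" "v < n"
  shows "ridem N v \<in> carrier_mat (rdim N) (rdim N)" "rarr N v \<in> carrier_mat (rdim N) (rdim N)"
  using assms unfolding is_module_def by auto

lemma module_idem_mult: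
  assumes "is_module n d N" "v < n" "w < n"
  shows "ridem N v * ridem N w = (if v = w then ridem N v else 0\<^sub>m (rdim N) (rdim N))"
  using assms unfolding is_module_def by auto

lemma module_arr_eq:
  assumes "is_module n d N" "v < n"
  shows "rarr N v = ridem N ((v + 1) mod n) * rarr N v * ridem N v"
  using assms unfolding is_module_def by auto

lemma idem_mult_arr:
  assumes N: "is_module n d N" and w: "w < n"
  shows "ridem N ((w + 1) mod n) * rarr N w = rarr N w"
proof -
  define u where "u = (w + 1) mod n"
  have u: "u < n" using w by (simp add: u_def)
  note cE = module_carrier(1)[OF N] and cA = module_carrier(2)[OF N w]
  have "ridem N u * rarr N w = ridem N u * (ridem N u * rarr N w * ridem N w)"
    using module_arr_eq[OF N w] by (simp add: u_def)
  also have "\<dots> = (ridem N u * ridem N u) * rarr N w * ridem N w"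
    using cE[OF u] cE[OF w] cA by (simp add: assoc_mult_mat[of _ "rdim N" "rdim N" _ "rdim N" _ "rdim N"])
  also have "\<dots> = rarr N w"
    using module_idem_mult[OF N u u] module_arr_eq[OF N w] by (simp add: u_def)
  finally show ?thesis by (simp add: u_def)
qed

lemma path_act_carrier:
  assumes N: "is_module n d N" and v: "v < n"
  shows "path_act n N v L \<in> carrier_mat (rdim N) (rdim N)"
proof (induction L)
  case (Suc L)
  have "(v + L) mod n < n" using v by simp
  then show ?case using Suc module_carrier[OF N] by (auto intro!: mult_carrier_mat)
qed (use assms module_carrier in auto)

lemma idem_mult_path_act:
  assumes N: "is_module n d N" and v: "v < n"
  shows "ridem N ((v + L) mod n) * path_act n N v L = path_act n N v L"
proof (induction L)
  case 0
  then show ?case using module_idem_mult[OF N v v] v by simp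
next
  case (Suc L)
  define w where "w = (v + L) mod n"
  have w: "w < n" using v by (simp add: w_def)
  have u: "(v + Suc L) mod n = (w + 1) mod n" by (simp add: w_def mod_Suc_eq)
  have "(w + 1) mod n < n" using v by simp
  then have "ridem N ((w + 1) mod n) * path_act n N v (Suc L)
      = (ridem N ((w + 1) mod n) * rarr N w) * path_act n N v L"
    using assoc_mult_mat[OF module_carrier(1)[OF N] module_carrier(2)[OF N w] path_act_carrier[OF N v]]
    by (simp add: w_def)
  then show ?case using idem_mult_arr[OF N w] u by (simp add: w_def)
qed

lemma idem_mult_path_act_other:
  assumes N: "is_module n d N" and v: "v < n" and w: "w < n" and ne: "w \<noteq> (v + L) mod n"
  shows "ridem N w * path_act n N v L = 0\<^sub>m (rdim N) (rdim N)"
proof -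
  have u: "(v + L) mod n < n" using v by simp
  have cP: "path_act n N v L \<in> carrier_mat (rdim N) (rdim N)" using path_act_carrier[OF N v] .
  have "ridem N w * path_act n N v L = ridem N w * (ridem N ((v + L) mod n) * path_act n N v L)"
    using idem_mult_path_act[OF N v] by simp
  also have "\<dots> = (ridem N w * ridem N ((v + L) mod n)) * path_act n N v L"
    using module_carrier[OF N w] module_carrier[OF N u] cP by simp
  also have "\<dots> = 0\<^sub>m (rdim N) (rdim N)" using module_idem_mult[OF N w u] ne cP by simp
  finally show ?thesis .
qed

lemma arr_mult_path_act_other:
  assumes N: "is_module n d N" and v: "v < n" and w: "w < n" and ne: "w \<noteq> (v + L) mod n"
  shows "rarr N w * path_act n N v L = 0\<^sub>m (rdim N) (rdim N)"
proof -
  have u: "(w + 1) mod n < n" using w by simp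
  note cE = module_carrier[OF N w] module_carrier[OF N u]
  have cP: "path_act n N v L \<in> carrier_mat (rdim N) (rdim N)" using path_act_carrier[OF N v] .
  have "rarr N w * path_act n N v L = (ridem N ((w + 1) mod n) * rarr N w * ridem N w) * path_act n N v L"
    using module_arr_eq[OF N w] by simp
  also have "\<dots> = (ridem N ((w + 1) mod n) * rarr N w) * (ridem N w * path_act n N v L)"
    using cE cP by (simp add: assoc_mult_mat[of _ "rdim N" "rdim N" _ "rdim N" _ "rdim N"])
  also have "\<dots> = 0\<^sub>m (rdim N) (rdim N)"
    using idem_mult_path_act_other[OF N v w ne] cE by simp
  finally show ?thesis .
qed

lemma is_hom_path_act_commute:
  assumes N: "is_module n d N" and L: "is_module n d L" and g: "is_hom n N L g" and v: "v < n"
  shows "g * path_act n N v k = path_act n L v k * g"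
proof (induction k)
  case 0
  then show ?case using g v unfolding is_hom_def by simp
next
  case (Suc k)
  define w where "w = (v + k) mod n"
  have w: "w < n" using v by (simp add: w_def)
  have cg: "g \<in> carrier_mat (rdim L) (rdim N)" using is_hom_carrier[OF g] .
  note cN = module_carrier(2)[OF N w] path_act_carrier[OF N v]
  note cL = module_carrier(2)[OF L w] path_act_carrier[OF L v]
  have "g * path_act n N v (Suc k) = (g * rarr N w) * path_act n N v k"
    using assoc_mult_mat[OF cg cN(1) cN(2), symmetric] by (simp add: w_def)
  also have "\<dots> = rarr L w * (g * path_act n N v k)"
    using g w assoc_mult_mat[OF cL(1) cg cN(2)] unfolding is_hom_def by simp
  also have "\<dots> = (rarr L w * path_act n L v k) * g"
    using assoc_mult_mat[OF cL(1) cL(2) cg] Suc by simp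
  finally show ?case by (simp add: w_def)
qed

lemma is_hom_mult:
  assumes A: "is_module n d A" and B: "is_module n d B" and C: "is_module n d C"
    and f: "is_hom n A B f" and g: "is_hom n B C g"
  shows "is_hom n A C (g * f)"
  unfolding is_hom_def
proof (intro conjI allI impI)
  have cf: "f \<in> carrier_mat (rdim B) (rdim A)" and cg: "g \<in> carrier_mat (rdim C) (rdim B)"
    using f g by (auto simp: is_hom_def)
  show "g * f \<in> carrier_mat (rdim C) (rdim A)" using cf cg by simp
  fix v assume v: "v < n"
  have comm: "f * ridem A v = ridem B v * f" "f * rarr A v = rarr B v * f"
    "g * ridem B v = ridem C v * g" "g * rarr B v = rarr C v * g" using f g v by (auto simp: is_hom_def)
  note cA = module_carrier[OF A v] and cB = module_carrier[OF B v] and cC = module_carrier[OF C v]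
  have "g * f * ridem A v = g * (f * ridem A v)" using assoc_mult_mat[OF cg cf cA(1)] .
  also have "\<dots> = (g * ridem B v) * f" using comm assoc_mult_mat[OF cg cB(1) cf] by simp
  also have "\<dots> = ridem C v * (g * f)" using comm assoc_mult_mat[OF cC(1) cg cf] by simp
  finally show "g * f * ridem A v = ridem C v * (g * f)" .
  have "g * f * rarr A v = g * (f * rarr A v)" using assoc_mult_mat[OF cg cf cA(2)] .
  also have "\<dots> = (g * rarr B v) * f" using comm assoc_mult_mat[OF cg cB(2) cf] by simp
  also have "\<dots> = rarr C v * (g * f)" using comm assoc_mult_mat[OF cC(2) cg cf] by simp
  finally show "g * f * rarr A v = rarr C v * (g * f)" .
qed

lemma is_hom_minus_smult_one:
  assumes M: "is_module n d M" and f: "is_hom n M M (f :: 'k::field mat)"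
  shows "is_hom n M M (f - c \<cdot>\<^sub>m 1\<^sub>m (rdim M))"
  unfolding is_hom_def
proof (intro conjI allI impI)
  have cf: "f \<in> carrier_mat (rdim M) (rdim M)" using is_hom_carrier[OF f] .
  have c1: "c \<cdot>\<^sub>m 1\<^sub>m (rdim M) \<in> carrier_mat (rdim M) (rdim M)" by simp
  show "f - c \<cdot>\<^sub>m 1\<^sub>m (rdim M) \<in> carrier_mat (rdim M) (rdim M)"
    using minus_carrier_mat[OF c1] cf by simp
  fix v assume v: "v < n"
  note cE = module_carrier[OF M v]
  have comm: "f * ridem M v = ridem M v * f" "f * rarr M v = rarr M v * f"
    using f v by (auto simp: is_hom_def)
  show "(f - c \<cdot>\<^sub>m 1\<^sub>m (rdim M)) * ridem M v = ridem M v * (f - c \<cdot>\<^sub>m 1\<^sub>m (rdim M))"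
    using comm minus_mult_distrib_mat[OF cf c1 cE(1)] mult_minus_distrib_mat[OF cE(1) cf c1]
      mult_smult_assoc_mat[OF one_carrier_mat cE(1)] mult_smult_distrib[OF cE(1) one_carrier_mat] cE
    by simp
  show "(f - c \<cdot>\<^sub>m 1\<^sub>m (rdim M)) * rarr M v = rarr M v * (f - c \<cdot>\<^sub>m 1\<^sub>m (rdim M))"
    using comm minus_mult_distrib_mat[OF cf c1 cE(2)] mult_minus_distrib_mat[OF cE(2) cf c1]
      mult_smult_assoc_mat[OF one_carrier_mat cE(2)] mult_smult_distrib[OF cE(2) one_carrier_mat] cE
    by simp
qed

section \<open>Uniserial modules\<close>

lemma uniserial_carrier [simp]:
  "rdim (uniserial n i m) = m"
  "ridem (uniserial n i m) v \<in> carrier_mat m m"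
  "rarr (uniserial n i m) v \<in> carrier_mat m m"
  "dim_row (ridem (uniserial n i m) v) = m" "dim_col (ridem (uniserial n i m) v) = m"
  "dim_row (rarr (uniserial n i m) v) = m" "dim_col (rarr (uniserial n i m) v) = m"
  by (auto simp: uniserial_def)

lemma path_act_uniserial:
  "path_act n (uniserial n i m) v L
     = mat m m (\<lambda>(r, s). if r = s + L \<and> (i + s) mod n = v then 1 else 0)"
proof (induction L)
  case 0
  then show ?case by (simp add: uniserial_def)
next
  case (Suc L)
  show ?case
  proof (rule eq_matI)
    fix r s assume "r < dim_row (mat m m (\<lambda>(r, s). if r = s + Suc L \<and> (i + s) mod n = v then 1 else (0::'a)))"
      and "s < dim_col (mat m m (\<lambda>(r, s). if r = s + Suc L \<and> (i + s) mod n = v then 1 else (0::'a)))"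
    then have r: "r < m" and s: "s < m" by auto
    have "path_act n (uniserial n i m) v (Suc L) $$ (r, s)
       = (\<Sum>q\<in>{0..<m}. (if r = q + 1 \<and> (i + q) mod n = (v + L) mod n then 1 else 0) *
            (if q = s + L \<and> (i + s) mod n = v then 1 else (0::'a)))"
      using r s Suc by (simp add: uniserial_def scalar_prod_def)
    also have "\<dots> = (\<Sum>q\<in>{0..<m}. if q = s + L then (if r = s + Suc L \<and> (i + s) mod n = v then 1 else 0) else 0)"
      by (rule sum.cong) (auto simp: mod_add_left_eq add.assoc)
    also have "\<dots> = (if r = s + Suc L \<and> (i + s) mod n = v then 1 else 0)"
      using r s by (auto simp: sum.delta)
    finally show "path_act n (uniserial n i m) v (Suc L) $$ (r, s)
        = mat m m (\<lambda>(r, s). if r = s + Suc L \<and> (i + s) mod n = v then 1 else (0::'a)) $$ (r, s)"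
      using r s by simp
  qed (use Suc in \<open>auto simp: uniserial_def\<close>)
qed

lemma path_act_uniserial_eq_0:
  assumes "m \<le> L"
  shows "path_act n (uniserial n i m) v L = (0\<^sub>m m m :: 'k::field mat)"
  unfolding path_act_uniserial using assms by (intro eq_matI) auto

lemma path_act_uniserial_mult_vec:
  fixes y :: "'k::field vec"
  assumes y: "y \<in> carrier_vec m" and r: "r < m"
  shows "(path_act n (uniserial n i m) v L *\<^sub>v y) $ r
         = (if L \<le> r \<and> (i + (r - L)) mod n = v then y $ (r - L) else 0)"
proof -
  have "(path_act n (uniserial n i m) v L *\<^sub>v y) $ r
      = (\<Sum>s\<in>{0..<m}. (if r = s + L \<and> (i + s) mod n = v then 1 else 0) * y $ s)"
    using y r by (simp add: path_act_uniserial scalar_prod_def)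
  also have "\<dots> = (\<Sum>s\<in>{0..<m}. if s = r - L then
                     (if L \<le> r \<and> (i + (r - L)) mod n = v then y $ (r - L) else 0) else 0)"
    by (rule sum.cong) auto
  also have "\<dots> = (if L \<le> r \<and> (i + (r - L)) mod n = v then y $ (r - L) else 0)"
    using r by (auto simp: sum.delta)
  finally show ?thesis .
qed

lemma ridem_uniserial_mult_vec:
  fixes y :: "'k::field vec"
  assumes "y \<in> carrier_vec m" "r < m"
  shows "(ridem (uniserial n i m) v *\<^sub>v y) $ r = (if (i + r) mod n = v then y $ r else 0)"
  using path_act_uniserial_mult_vec[OF assms, of n i v 0] by simp

lemma col_ridem_uniserial:
  assumes "s < m"
  shows "col (ridem (uniserial n i m) v) s = (if (i + s) mod n = v then unit_vec m s else 0\<^sub>v m)"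
  using assms by (intro eq_vecI) (auto simp: uniserial_def)

lemma col_rarr_uniserial:
  assumes "s < m"
  shows "col (rarr (uniserial n i m) v) s
           = (if (i + s) mod n = v \<and> Suc s < m then unit_vec m (Suc s) else 0\<^sub>v m)"
  using assms by (intro eq_vecI) (auto simp: uniserial_def)

lemma col_mult_ridem_uniserial:
  fixes f :: "'k::field mat"
  assumes cf: "f \<in> carrier_mat a m" and s: "s < m"
  shows "col (f * ridem (uniserial n i m) v) s = (if (i + s) mod n = v then col f s else 0\<^sub>v a)"
  using cf by (simp add: col_mult2[OF cf uniserial_carrier(2) s] col_ridem_uniserial[OF s]
    mult_unit_vec_eq_col[OF cf s])

lemma col_mult_rarr_uniserial:
  fixes f :: "'k::field mat"
  assumes cf: "f \<in> carrier_mat a m" and s: "s < m"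
  shows "col (f * rarr (uniserial n i m) v) s
           = (if (i + s) mod n = v \<and> Suc s < m then col f (Suc s) else 0\<^sub>v a)"
  using cf by (simp add: col_mult2[OF cf uniserial_carrier(3) s] col_rarr_uniserial[OF s]
    mult_unit_vec_eq_col[OF cf])

lemma uniserial_rarr_eq:
  "(rarr (uniserial n i m) v :: 'k::field mat)
     = ridem (uniserial n i m) ((v + 1) mod n) * rarr (uniserial n i m) v * ridem (uniserial n i m) v"
proof (rule mat_col_eqI)
  let ?U = "uniserial n i m :: 'k rep"
  fix s assume "s < dim_col (ridem ?U ((v + 1) mod n) * rarr ?U v * ridem ?U v)"
  then have s: "s < m" by simp
  have "col (ridem ?U ((v + 1) mod n) * rarr ?U v * ridem ?U v) s
      = (if (i + s) mod n = v then col (ridem ?U ((v + 1) mod n) * rarr ?U v) s else 0\<^sub>v m)"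
    by (rule col_mult_ridem_uniserial[OF mult_carrier_mat[OF uniserial_carrier(2,3)] s])
  also have "\<dots> = (if (i + s) mod n = v \<and> Suc s < m then col (ridem ?U ((v + 1) mod n)) (Suc s) else 0\<^sub>v m)"
    by (subst col_mult_rarr_uniserial[OF uniserial_carrier(2) s]) auto
  also have "\<dots> = col (rarr ?U v) s"
  proof -
    have "Suc s < m \<Longrightarrow> col (ridem ?U ((v + 1) mod n)) (Suc s)
        = (if (i + Suc s) mod n = (v + 1) mod n then unit_vec m (Suc s) else 0\<^sub>v m)"
      by (rule col_ridem_uniserial)
    moreover have "col (rarr ?U v) s
        = (if (i + s) mod n = v \<and> Suc s < m then unit_vec m (Suc s) else 0\<^sub>v m)"
      by (rule col_rarr_uniserial[OF s])
    moreover have "(i + s) mod n = v \<Longrightarrow> (i + Suc s) mod n = (v + 1) mod n"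
      by (metis add_Suc_right mod_Suc_eq Suc_eq_plus1)
    ultimately show ?thesis by auto
  qed
  finally show "col (rarr ?U v) s = col (ridem ?U ((v + 1) mod n) * rarr ?U v * ridem ?U v) s"
    by simp
qed simp_all

lemma uniserial_ridem_mult:
  "ridem (uniserial n i m) v * ridem (uniserial n i m) w
     = (if v = w then ridem (uniserial n i m) v else (0\<^sub>m m m :: 'k::field mat))"
proof (rule mat_col_eqI)
  let ?U = "uniserial n i m :: 'k rep"
  fix s assume "s < dim_col (if v = w then ridem ?U v else 0\<^sub>m m m)"
  then have s: "s < m" by (simp split: if_splits)
  have "col (ridem ?U v) s = (if (i + s) mod n = v then unit_vec m s else 0\<^sub>v m)"
    by (rule col_ridem_uniserial[OF s])
  then show "col (ridem ?U v * ridem ?U w) s = col (if v = w then ridem ?U v else 0\<^sub>m m m) s"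
    using col_mult_ridem_uniserial[OF _ s, of "ridem ?U v" m n i w] s by auto
qed simp_all

lemma idem_sum_uniserial:
  assumes "0 < n"
  shows "idem_sum m (ridem (uniserial n i m)) n = (1\<^sub>m m :: 'k::field mat)"
proof -
  have "idem_sum m (ridem (uniserial n i m)) k
      = (mat m m (\<lambda>(r, s). if r = s \<and> (i + s) mod n < k then 1 else 0) :: 'k mat)" for k
    by (induction k) (auto simp: uniserial_def intro!: eq_matI)
  then show ?thesis using assms by (auto intro!: eq_matI)
qed

lemma is_module_uniserial:
  assumes n: "0 < n" and m: "m \<le> d * n + 1"
  shows "is_module n d (uniserial n i m :: 'k::field rep)"
  unfolding is_module_def
proof (intro conjI allI impI)
  let ?U = "uniserial n i m :: 'k rep"
  fix v w assume "v < n" "w < n"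
  show "ridem ?U v * ridem ?U w = (if v = w then ridem ?U v else 0\<^sub>m (rdim ?U) (rdim ?U))"
    by (simp add: uniserial_ridem_mult)
next
  let ?U = "uniserial n i m :: 'k rep"
  fix v assume "v < n"
  show "rarr ?U v = ridem ?U ((v + 1) mod n) * rarr ?U v * ridem ?U v"
    by (rule uniserial_rarr_eq)
  show "path_act n ?U v (d * n + 1) = 0\<^sub>m (rdim ?U) (rdim ?U)"
    using path_act_uniserial_eq_0[OF m, of n i v] by (simp del: path_act.simps)
qed (use n in \<open>simp_all add: idem_sum_uniserial\<close>)

section \<open>Homomorphisms out of a uniserial module\<close>

lemma col_hom_from_uniserial:
  assumes N: "is_module n d N" and i: "i < n" and f: "is_hom n (uniserial n i m) N f"
  shows "s < m \<Longrightarrow> col f s = path_act n N i s *\<^sub>v col f 0"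
proof (induction s)
  case 0
  have cf: "f \<in> carrier_mat (rdim N) m" using is_hom_carrier[OF f] by simp
  have "col f 0 = col (f * ridem (uniserial n i m) i) 0"
    using col_mult_ridem_uniserial[OF cf 0, of n i i] i by simp
  also have "\<dots> = col (ridem N i * f) 0" using f i unfolding is_hom_def by simp
  also have "\<dots> = ridem N i *\<^sub>v col f 0" by (rule col_mult2[OF module_carrier(1)[OF N i] cf 0])
  finally show ?case by simp
next
  case (Suc s)
  define w where "w = (i + s) mod n"
  have w: "w < n" using i by (simp add: w_def)
  have cf: "f \<in> carrier_mat (rdim N) m" using is_hom_carrier[OF f] by simp
  have s: "s < m" using Suc by simp
  have "col f (Suc s) = col (f * rarr (uniserial n i m) w) s"
    using col_mult_rarr_uniserial[OF cf s, of n i w] Suc by (simp add: w_def)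
  also have "\<dots> = col (rarr N w * f) s" using f w unfolding is_hom_def by simp
  also have "\<dots> = rarr N w *\<^sub>v (path_act n N i s *\<^sub>v col f 0)"
    using col_mult2[OF module_carrier(2)[OF N w] cf s] Suc s by simp
  also have "\<dots> = (rarr N w * path_act n N i s) *\<^sub>v col f 0"
    using assoc_mult_mat_vec[OF module_carrier(2)[OF N w] path_act_carrier[OF N i], of "col f 0" s] cf
    by (simp add: carrier_vecI)
  finally show ?case by (simp add: w_def)
qed

lemma hom_from_uniserial_path_act_top:
  assumes N: "is_module n d N" and i: "i < n" and f: "is_hom n (uniserial n i m) N f"
    and m: "0 < m"
  shows "path_act n N i m *\<^sub>v col f 0 = 0\<^sub>v (rdim N)"
proof -
  obtain s where ms: "m = Suc s" using m gr0_implies_Suc by blast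
  define w where "w = (i + s) mod n"
  have w: "w < n" using i by (simp add: w_def)
  have cf: "f \<in> carrier_mat (rdim N) m" using is_hom_carrier[OF f] by simp
  have "0\<^sub>v (rdim N) = col (f * rarr (uniserial n i m) w) s"
    using col_mult_rarr_uniserial[OF cf, of s n i w] ms by (simp add: w_def)
  also have "\<dots> = col (rarr N w * f) s" using f w unfolding is_hom_def by simp
  also have "\<dots> = rarr N w *\<^sub>v (path_act n N i s *\<^sub>v col f 0)"
    using col_mult2[OF module_carrier(2)[OF N w] cf] col_hom_from_uniserial[OF N i f, of s] ms
    by simp
  also have "\<dots> = (rarr N w * path_act n N i s) *\<^sub>v col f 0"
    using assoc_mult_mat_vec[OF module_carrier(2)[OF N w] path_act_carrier[OF N i], of "col f 0" s] cf
    by (simp add: carrier_vecI)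
  finally show ?thesis by (simp add: w_def ms)
qed

definition uniserial_hom :: "nat \<Rightarrow> 'k::field rep \<Rightarrow> nat \<Rightarrow> nat \<Rightarrow> 'k vec \<Rightarrow> 'k mat" where
  "uniserial_hom n N i m x = mat (rdim N) m (\<lambda>(r, s). (path_act n N i s *\<^sub>v x) $ r)"

lemma uniserial_hom_carrier: "uniserial_hom n N i m x \<in> carrier_mat (rdim N) m"
  by (simp add: uniserial_hom_def)

lemma col_uniserial_hom:
  assumes N: "is_module n d N" and i: "i < n" and s: "s < m"
  shows "col (uniserial_hom n N i m x) s = path_act n N i s *\<^sub>v x"
  using s carrier_matD[OF path_act_carrier[OF N i, of s]]
  by (intro eq_vecI) (auto simp: uniserial_hom_def)

lemma uniserial_hom_mult_ridem:
  assumes N: "is_module n d N" and i: "i < n" and x: "x \<in> carrier_vec (rdim N)" and v: "v < n"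
  shows "uniserial_hom n N i m x * ridem (uniserial n i m) v = ridem N v * uniserial_hom n N i m x"
proof (rule mat_col_eqI)
  let ?H = "uniserial_hom n N i m x"
  have cH: "?H \<in> carrier_mat (rdim N) m" by (rule uniserial_hom_carrier)
  note cE = module_carrier(1)[OF N v]
  fix s assume "s < dim_col (ridem N v * ?H)"
  then have s: "s < m" using cH by simp
  have "col (?H * ridem (uniserial n i m) v) s
      = (if (i + s) mod n = v then path_act n N i s *\<^sub>v x else 0\<^sub>v (rdim N))"
    using col_mult_ridem_uniserial[OF cH s, of n i v] col_uniserial_hom[OF N i s] by auto
  also have "\<dots> = (ridem N v * path_act n N i s) *\<^sub>v x"
    using idem_mult_path_act[OF N i, of s] idem_mult_path_act_other[OF N i v, of s] x
    by (auto simp: add.commute)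
  also have "\<dots> = col (ridem N v * ?H) s"
    using col_uniserial_hom[OF N i s] assoc_mult_mat_vec[OF cE path_act_carrier[OF N i] x]
      col_mult2[OF cE cH s] by simp
  finally show "col (?H * ridem (uniserial n i m) v) s = col (ridem N v * ?H) s" .
qed (use module_carrier(1)[OF N v] in \<open>simp_all add: uniserial_hom_def\<close>)

lemma uniserial_hom_mult_rarr:
  assumes N: "is_module n d N" and i: "i < n" and x: "x \<in> carrier_vec (rdim N)" and v: "v < n"
    and kill: "path_act n N i m *\<^sub>v x = 0\<^sub>v (rdim N)"
  shows "uniserial_hom n N i m x * rarr (uniserial n i m) v = rarr N v * uniserial_hom n N i m x"
proof (rule mat_col_eqI)
  let ?H = "uniserial_hom n N i m x"
  have cH: "?H \<in> carrier_mat (rdim N) m" by (rule uniserial_hom_carrier)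
  note cA = module_carrier(2)[OF N v]
  fix s assume "s < dim_col (rarr N v * ?H)"
  then have s: "s < m" using cH by simp
  have "col (?H * rarr (uniserial n i m) v) s
      = (if (i + s) mod n = v \<and> Suc s < m then path_act n N i (Suc s) *\<^sub>v x else 0\<^sub>v (rdim N))"
    using col_mult_rarr_uniserial[OF cH s, of n i v] col_uniserial_hom[OF N i] by auto
  also have "\<dots> = (rarr N v * path_act n N i s) *\<^sub>v x"
  proof (cases "(i + s) mod n = v")
    case True
    then have "path_act n N i (Suc s) = rarr N v * path_act n N i s" by simp
    moreover have "\<not> Suc s < m \<Longrightarrow> Suc s = m" using s by simp
    ultimately show ?thesis using True kill by auto
  next
    case False
    then show ?thesis using arr_mult_path_act_other[OF N i v, of s] x by simp
  qed
  also have "\<dots> = col (rarr N v * ?H) s"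
    using col_uniserial_hom[OF N i s] assoc_mult_mat_vec[OF cA path_act_carrier[OF N i] x]
      col_mult2[OF cA cH s] by simp
  finally show "col (?H * rarr (uniserial n i m) v) s = col (rarr N v * ?H) s" .
qed (use module_carrier(2)[OF N v] in \<open>simp_all add: uniserial_hom_def\<close>)

lemma is_hom_uniserial_hom:
  assumes N: "is_module n d N" and i: "i < n" and x: "x \<in> carrier_vec (rdim N)"
    and kill: "path_act n N i m *\<^sub>v x = 0\<^sub>v (rdim N)"
  shows "is_hom n (uniserial n i m) N (uniserial_hom n N i m x)"
  unfolding is_hom_def
  using uniserial_hom_mult_ridem[OF N i x] uniserial_hom_mult_rarr[OF N i x _ kill]
  by (simp add: uniserial_hom_carrier)

section \<open>The projective cover of a uniserial module\<close>

lemma projective_uniserial: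
  assumes n: "0 < n" and i: "i < n"
  shows "projective n d (uniserial n i (d * n + 1) :: 'k::field rep)"
  unfolding projective_def
proof (intro conjI allI impI)
  let ?Q = "uniserial n i (d * n + 1) :: 'k rep"
  show "is_module n d ?Q" by (rule is_module_uniserial[OF n le_refl])
  fix N L :: "'k rep" and g h
  assume "is_module n d N \<and> is_module n d L \<and> is_surj_hom n N L g \<and> is_hom n ?Q L h"
  then have N: "is_module n d N" and L: "is_module n d L" and g: "is_hom n N L g"
    and h: "is_hom n ?Q L h"
    and surj: "\<forall>y \<in> carrier_vec (rdim L). \<exists>x \<in> carrier_vec (rdim N). g *\<^sub>v x = y"
    unfolding is_surj_hom_def by auto
  have ch: "h \<in> carrier_mat (rdim L) (d * n + 1)" using is_hom_carrier[OF h] by simp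
  have cg: "g \<in> carrier_mat (rdim L) (rdim N)" using is_hom_carrier[OF g] .
  have "col h 0 \<in> carrier_vec (rdim L)" using ch by (simp add: carrier_vecI)
  then obtain x where x: "x \<in> carrier_vec (rdim N)" and gx: "g *\<^sub>v x = col h 0"
    using surj by blast
  have kill: "path_act n N i (d * n + 1) *\<^sub>v x = 0\<^sub>v (rdim N)"
    using N i x unfolding is_module_def by (simp del: path_act.simps)
  let ?h' = "uniserial_hom n N i (d * n + 1) x"
  have ch': "?h' \<in> carrier_mat (rdim N) (d * n + 1)" by (rule uniserial_hom_carrier)
  have "g * ?h' = h"
  proof (rule mat_col_eqI)
    fix s assume "s < dim_col h"
    then have s: "s < d * n + 1" using ch by simp
    have "col (g * ?h') s = g *\<^sub>v (path_act n N i s *\<^sub>v x)"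
      using col_mult2[OF cg ch' s] col_uniserial_hom[OF N i s] by simp
    also have "\<dots> = (path_act n L i s * g) *\<^sub>v x"
      using assoc_mult_mat_vec[OF cg path_act_carrier[OF N i] x] is_hom_path_act_commute[OF N L g i]
      by simp
    also have "\<dots> = col h s"
      using assoc_mult_mat_vec[OF path_act_carrier[OF L i] cg x] gx col_hom_from_uniserial[OF L i h s]
      by simp
    finally show "col (g * ?h') s = col h s" .
  qed (use cg ch ch' in auto)
  then show "\<exists>h'. is_hom n ?Q N h' \<and> g * h' = h"
    using is_hom_uniserial_hom[OF N i x kill] by blast
qed

definition trunc_mat :: "nat \<Rightarrow> nat \<Rightarrow> 'k::field mat" where
  "trunc_mat l k = mat l k (\<lambda>(r, s). if r = s then 1 else 0)"

lemma trunc_mat_mult_vec: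
  fixes x :: "'k::field vec"
  assumes x: "x \<in> carrier_vec k" and r: "r < l" and lk: "l \<le> k"
  shows "(trunc_mat l k *\<^sub>v x) $ r = x $ r"
proof -
  have "(trunc_mat l k *\<^sub>v x) $ r = (\<Sum>s\<in>{0..<k}. (if r = s then 1 else 0) * x $ s)"
    using x r by (simp add: trunc_mat_def scalar_prod_def)
  also have "\<dots> = (\<Sum>s\<in>{0..<k}. if s = r then x $ r else 0)"
    by (rule sum.cong) auto
  also have "\<dots> = x $ r" using r lk by (simp add: sum.delta)
  finally show ?thesis .
qed

lemma uniserial_hom_top_eq_trunc_mat:
  assumes i: "i < n" and l: "0 < l"
  shows "uniserial_hom n (uniserial n i l) i k (unit_vec l 0) = (trunc_mat l k :: 'k::field mat)"
proof (rule eq_matI)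
  fix r s assume "r < dim_row (trunc_mat l k :: 'k mat)" "s < dim_col (trunc_mat l k :: 'k mat)"
  then have r: "r < l" and s: "s < k" by (auto simp: trunc_mat_def)
  have "uniserial_hom n (uniserial n i l) i k (unit_vec l 0) $$ (r, s)
      = (path_act n (uniserial n i l) i s *\<^sub>v (unit_vec l 0 :: 'k vec)) $ r"
    using r s by (simp add: uniserial_hom_def)
  also have "\<dots> = (if s \<le> r \<and> (i + (r - s)) mod n = i then (unit_vec l 0 :: 'k vec) $ (r - s) else 0)"
    by (rule path_act_uniserial_mult_vec[OF unit_vec_carrier r])
  also have "\<dots> = (if r = s then 1 else 0)" using r i by auto
  finally show "uniserial_hom n (uniserial n i l) i k (unit_vec l 0) $$ (r, s) = (trunc_mat l k :: 'k mat) $$ (r, s)"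
    using r s by (simp add: trunc_mat_def)
qed (auto simp: trunc_mat_def uniserial_hom_def)

lemma is_surj_hom_trunc_mat:
  assumes n: "0 < n" and i: "i < n" and l: "0 < l" "l \<le> d * n + 1"
  shows "is_surj_hom n (uniserial n i (d * n + 1)) (uniserial n i l) (trunc_mat l (d * n + 1) :: 'k::field mat)"
  unfolding is_surj_hom_def
proof (intro conjI ballI)
  have "is_hom n (uniserial n i (d * n + 1)) (uniserial n i l)
      (uniserial_hom n (uniserial n i l) i (d * n + 1) (unit_vec l 0))"
    by (rule is_hom_uniserial_hom[OF is_module_uniserial[OF n l(2)] i])
      (use l in \<open>simp_all add: path_act_uniserial_eq_0 del: path_act.simps\<close>)
  then show "is_hom n (uniserial n i (d * n + 1)) (uniserial n i l) (trunc_mat l (d * n + 1) :: 'k mat)"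
    by (simp add: uniserial_hom_top_eq_trunc_mat[OF i l(1)])
  fix y :: "'k vec" assume y: "y \<in> carrier_vec (rdim (uniserial n i l :: 'k rep))"
  let ?x = "vec (d * n + 1) (\<lambda>r. if r < l then y $ r else 0)"
  have "trunc_mat l (d * n + 1) *\<^sub>v ?x = y"
    using trunc_mat_mult_vec[of ?x "d * n + 1" _ l] y l
    by (intro eq_vecI) (auto simp: trunc_mat_def)
  then show "\<exists>x\<in>carrier_vec (rdim (uniserial n i (d * n + 1) :: 'k rep)). trunc_mat l (d * n + 1) *\<^sub>v x = y"
    by force
qed

section \<open>Stable endomorphisms of a uniserial module\<close>

lemma hom_uniserial_to_cover_top_eq_0:
  assumes n: "0 < n" and i: "i < n" and l: "0 < l"
    and k: "is_hom n (uniserial n i l) (uniserial n i (d * n + 1)) (k :: 'k::field mat)"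
    and rl: "r + l \<le> d * n"
  shows "k $$ (r, 0) = 0"
proof -
  let ?Q = "uniserial n i (d * n + 1) :: 'k rep"
  have Q: "is_module n d ?Q" by (rule is_module_uniserial[OF n le_refl])
  have ck: "k \<in> carrier_mat (d * n + 1) l" using is_hom_carrier[OF k] by simp
  define y where "y = col k 0"
  have y: "y \<in> carrier_vec (d * n + 1)" using ck by (simp add: y_def carrier_vecI)
  have r: "r < d * n + 1" "r + l < d * n + 1" using rl l by simp_all
  \<comment> \<open>y = k b_0 is killed by the path of length l, which moves b_r injectively to b_(r+l)
    when r + l \<le> dn; and y lies at vertex i\<close>
  have "(path_act n ?Q i l *\<^sub>v y) $ (r + l) = (if (i + r) mod n = i then y $ r else 0)"
    using path_act_uniserial_mult_vec[OF y r(2)] by simp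
  moreover have "path_act n ?Q i l *\<^sub>v y = 0\<^sub>v (d * n + 1)"
    using hom_from_uniserial_path_act_top[OF Q i k l] by (simp add: y_def)
  moreover have "y $ r = (ridem ?Q i *\<^sub>v y) $ r"
    using col_hom_from_uniserial[OF Q i k l] by (simp add: y_def)
  then have "y $ r = (if (i + r) mod n = i then y $ r else 0)"
    using ridem_uniserial_mult_vec[OF y r(1)] by simp
  ultimately have "y $ r = 0" using r by (simp split: if_splits)
  then show ?thesis using ck r l by (simp add: y_def)
qed

lemma factors_through_proj_uniserial_top_eq_0:
  assumes n: "0 < n" and i: "i < n" and l: "0 < l"
    and fac: "factors_through_proj n d (uniserial n i l) (uniserial n i l) (F :: 'k::field mat)"
    and r: "r < l" and rl: "r + l \<le> d * n"
  shows "F $$ (r, 0) = 0"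
proof -
  let ?M = "uniserial n i l :: 'k rep"
  let ?Q = "uniserial n i (d * n + 1) :: 'k rep"
  let ?\<pi> = "trunc_mat l (d * n + 1) :: 'k mat"
  have l1: "l \<le> d * n + 1" using rl by simp
  have M: "is_module n d ?M" by (rule is_module_uniserial[OF n l1])
  have Q: "is_module n d ?Q" by (rule is_module_uniserial[OF n le_refl])
  obtain P g h where P: "projective n d (P :: 'k rep)" and g: "is_hom n ?M P g"
    and h: "is_hom n P ?M h" and Fgh: "F = h * g"
    using fac unfolding factors_through_proj_def by blast
  have Pm: "is_module n d P" using P unfolding projective_def by simp
  obtain h' where h': "is_hom n P ?Q h'" and \<pi>h': "?\<pi> * h' = h"
    using P Q M is_surj_hom_trunc_mat[OF n i l l1] h unfolding projective_def by blast
  define k where "k = h' * g"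
  have k: "is_hom n ?M ?Q k" unfolding k_def by (rule is_hom_mult[OF M Pm Q g h'])
  have c\<pi>: "?\<pi> \<in> carrier_mat l (d * n + 1)" by (simp add: trunc_mat_def)
  have ck: "k \<in> carrier_mat (d * n + 1) l" using is_hom_carrier[OF k] by simp
  have "h' \<in> carrier_mat (d * n + 1) (rdim P)" "g \<in> carrier_mat (rdim P) l"
    using is_hom_carrier[OF h'] is_hom_carrier[OF g] by simp_all
  then have "F = ?\<pi> * k" unfolding k_def using Fgh \<pi>h' assoc_mult_mat[OF c\<pi>] by metis
  then have "col F 0 = ?\<pi> *\<^sub>v col k 0" using col_mult2[OF c\<pi> ck l] by simp
  moreover have "F \<in> carrier_mat l l"
    using is_hom_carrier[OF is_hom_mult[OF M Pm M g h]] Fgh by simp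
  then have "F $$ (r, 0) = col F 0 $ r" using r by simp
  ultimately have "F $$ (r, 0) = (?\<pi> *\<^sub>v col k 0) $ r" by simp
  also have "\<dots> = k $$ (r, 0)"
    using trunc_mat_mult_vec[of "col k 0" "d * n + 1" r l] ck r l1 by (simp add: carrier_vecI)
  also have "\<dots> = 0" by (rule hom_uniserial_to_cover_top_eq_0[OF n i l k rl])
  finally show ?thesis .
qed

lemma factors_through_proj_uniserialI:
  assumes n: "0 < n" and i: "i < n" and l: "0 < l" "l \<le> d * n + 1"
    and F: "is_hom n (uniserial n i l) (uniserial n i l) (F :: 'k::field mat)"
    and top: "\<And>r. r < l \<Longrightarrow> r + l \<le> d * n \<Longrightarrow> F $$ (r, 0) = 0"
  shows "factors_through_proj n d (uniserial n i l) (uniserial n i l) F"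
proof -
  let ?M = "uniserial n i l :: 'k rep"
  let ?Q = "uniserial n i (d * n + 1) :: 'k rep"
  let ?\<pi> = "trunc_mat l (d * n + 1) :: 'k mat"
  have M: "is_module n d ?M" by (rule is_module_uniserial[OF n l(2)])
  have Q: "is_module n d ?Q" by (rule is_module_uniserial[OF n le_refl])
  have \<pi>: "is_hom n ?Q ?M ?\<pi>"
    by (rule conjunct1[OF is_surj_hom_trunc_mat[OF n i l, unfolded is_surj_hom_def]])
  have c\<pi>: "?\<pi> \<in> carrier_mat l (d * n + 1)" by (simp add: trunc_mat_def)
  have cF: "F \<in> carrier_mat l l" using is_hom_carrier[OF F] by simp
  define u :: "'k vec" where "u = vec (d * n + 1) (\<lambda>r. if r < l then F $$ (r, 0) else 0)"
  have u: "u \<in> carrier_vec (d * n + 1)" by (simp add: u_def)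
  have kill: "path_act n ?Q i l *\<^sub>v u = 0\<^sub>v (rdim ?Q)"
  proof (rule eq_vecI)
    fix r assume "r < dim_vec (0\<^sub>v (rdim ?Q) :: 'k vec)"
    then have r: "r < d * n + 1" by simp
    show "(path_act n ?Q i l *\<^sub>v u) $ r = (0\<^sub>v (rdim ?Q) :: 'k vec) $ r"
      using path_act_uniserial_mult_vec[OF u r, of n i i l] top r by (auto simp: u_def)
  qed (simp add: path_act_uniserial)
  let ?g = "uniserial_hom n ?Q i l u"
  have g: "is_hom n ?M ?Q ?g" by (rule is_hom_uniserial_hom[OF Q i _ kill]) (use u in simp)
  have cg: "?g \<in> carrier_mat (d * n + 1) l" using uniserial_hom_carrier[of n ?Q i l u] by simp
  have \<pi>u: "?\<pi> *\<^sub>v u = col F 0"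
    using trunc_mat_mult_vec[OF u _ l(2)] cF c\<pi> l by (intro eq_vecI) (auto simp: u_def)
  have "F = ?\<pi> * ?g"
  proof (rule mat_col_eqI)
    fix s assume "s < dim_col (?\<pi> * ?g)"
    then have s: "s < l" using cg by simp
    have "col (?\<pi> * ?g) s = (?\<pi> * path_act n ?Q i s) *\<^sub>v u"
      using col_mult2[OF c\<pi> cg s] col_uniserial_hom[OF Q i s]
        assoc_mult_mat_vec[OF c\<pi> _ u] path_act_carrier[OF Q i, of s] by simp
    also have "\<dots> = path_act n ?M i s *\<^sub>v col F 0"
      using is_hom_path_act_commute[OF Q M \<pi> i]
        assoc_mult_mat_vec[OF _ c\<pi> u] path_act_carrier[OF M i, of s] \<pi>u by simp
    also have "\<dots> = col F s" using col_hom_from_uniserial[OF M i F s] by simp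
    finally show "col F s = col (?\<pi> * ?g) s" by simp
  qed (use cF c\<pi> cg in auto)
  then show ?thesis
    unfolding factors_through_proj_def using projective_uniserial[OF n i] g \<pi> by blast
qed

lemma add_mod_neq_self:
  fixes i r n :: nat
  assumes "i < n" "0 < r" "r < n"
  shows "(i + r) mod n \<noteq> i"
proof (cases "i + r < n")
  case False
  then have "(i + r) mod n = i + r - n" using assms by (simp add: mod_if)
  moreover have "i + r - n \<noteq> i" using assms False by arith
  ultimately show ?thesis by simp
qed (use assms in simp)

lemma stable_brick_uniserial:
  assumes n: "0 < n" and i: "i < n" and l: "0 < l" "l \<le> d * n"
    and short: "l \<le> n \<or> d * n < l + n"
  shows "stable_brick n d (uniserial n i l :: 'k::field rep)"
  unfolding stable_brick_def
proof (intro conjI allI impI)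
  let ?M = "uniserial n i l :: 'k rep"
  have M: "is_module n d ?M" by (rule is_module_uniserial) (use n l in simp_all)
  fix f assume f: "is_hom n ?M ?M f"
  have cf: "f \<in> carrier_mat l l" using is_hom_carrier[OF f] by simp
  have col0: "col f 0 = ridem ?M i *\<^sub>v col f 0"
    using col_hom_from_uniserial[OF M i f l(1)] by simp
  have cv: "col f 0 \<in> carrier_vec l" using cf by (simp add: carrier_vecI)
  have top: "f $$ (r, 0) = 0" if "0 < r" "r < n" "r < l" for r
  proof -
    have "f $$ (r, 0) = col f 0 $ r" using cf that l by simp
    also have "\<dots> = (ridem ?M i *\<^sub>v col f 0) $ r" using arg_cong[OF col0, of "\<lambda>y. y $ r"] .
    also have "\<dots> = 0"
      using ridem_uniserial_mult_vec[OF cv that(3), of n i i] add_mod_neq_self[OF i that(1,2)] by simp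
    finally show ?thesis .
  qed
  \<comment> \<open>f b_0 lies at vertex i, so it only has components b_r with n dividing r, and under
    the hypothesis short the condition r + l \<le> dn leaves only r = 0\<close>
  have "factors_through_proj n d ?M ?M (f - f $$ (0, 0) \<cdot>\<^sub>m 1\<^sub>m (rdim ?M))"
  proof (rule factors_through_proj_uniserialI[OF n i l(1) _ is_hom_minus_smult_one[OF M f]])
    fix r assume r: "r < l" "r + l \<le> d * n"
    then have "r < n" using short by auto
    then show "(f - f $$ (0, 0) \<cdot>\<^sub>m 1\<^sub>m (rdim ?M)) $$ (r, 0) = 0"
      using top[of r] cf r l by (cases "r = 0") simp_all
  qed (use l in simp)
  then show "\<exists>c. factors_through_proj n d ?M ?M (f - c \<cdot>\<^sub>m 1\<^sub>m (rdim ?M))" by blast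
next
  let ?M = "uniserial n i l :: 'k rep"
  show "\<not> factors_through_proj n d ?M ?M (1\<^sub>m (rdim ?M))"
  proof
    assume "factors_through_proj n d ?M ?M (1\<^sub>m (rdim ?M))"
    then have "1\<^sub>m (rdim ?M) $$ (0, 0) = (0 :: 'k)"
      by (rule factors_through_proj_uniserial_top_eq_0[OF n i l(1)]) (use l in simp_all)
    then show False using l by simp
  qed
qed

lemma not_stable_brick_uniserial:
  assumes n: "0 < n" and i: "i < n" and nl: "n < l" and lnd: "n + l \<le> d * n"
  shows "\<not> stable_brick n d (uniserial n i l :: 'k::field rep)"
proof
  let ?M = "uniserial n i l :: 'k rep"
  have l: "0 < l" using nl by simp
  have M: "is_module n d ?M" by (rule is_module_uniserial) (use n lnd in simp_all)
  assume brick: "stable_brick n d ?M"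
  \<comment> \<open>the endomorphism b_0 to b_n, i.e. multiplication by the cycle of length n\<close>
  let ?f = "uniserial_hom n ?M i l (unit_vec l n) :: 'k mat"
  have f: "is_hom n ?M ?M ?f"
    by (rule is_hom_uniserial_hom[OF M i]) (simp_all add: path_act_uniserial_eq_0)
  have cf: "?f \<in> carrier_mat l l" using uniserial_hom_carrier[of n ?M i l] by simp
  have f_entry: "?f $$ (r, 0) = (if (i + r) mod n = i then unit_vec l n $ r else 0)" if "r < l" for r
    using that l ridem_uniserial_mult_vec[OF unit_vec_carrier that, of n i i n]
    by (simp add: uniserial_hom_def)
  obtain c where fac: "factors_through_proj n d ?M ?M (?f - c \<cdot>\<^sub>m 1\<^sub>m (rdim ?M))"
    using brick f unfolding stable_brick_def by blast
  have "(?f - c \<cdot>\<^sub>m 1\<^sub>m (rdim ?M)) $$ (0, 0) = 0"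
    by (rule factors_through_proj_uniserial_top_eq_0[OF n i l fac]) (use l lnd in simp_all)
  then have "c = 0" using f_entry[of 0] cf l nl i by simp
  moreover have "(?f - c \<cdot>\<^sub>m 1\<^sub>m (rdim ?M)) $$ (n, 0) = 0"
    by (rule factors_through_proj_uniserial_top_eq_0[OF n i l fac nl lnd])
  ultimately show False using f_entry[of n] cf nl i by simp
qed

lemma stable_brick_uniserial_iff:
  assumes n: "0 < n" and i: "i < n" and l: "0 < l" "l \<le> d * n"
  shows "stable_brick n d (uniserial n i l :: 'k::field rep) \<longleftrightarrow> l \<le> n \<or> d * n < l + n"
proof
  assume brick: "stable_brick n d (uniserial n i l :: 'k rep)"
  show "l \<le> n \<or> d * n < l + n"
  proof (rule ccontr)
    assume "\<not> ?thesis"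
    then have "\<not> stable_brick n d (uniserial n i l :: 'k rep)"
      by (intro not_stable_brick_uniserial[OF n i]) auto
    then show False using brick by simp
  qed
qed (rule stable_brick_uniserial[OF n i l])

lemma length_window_iff:
  fixes n d t r l :: nat
  assumes r: "r < n" and l: "l = t * n + r + 1" and ld: "l \<le> d * n"
  shows "l \<le> n \<or> d * n < l + n \<longleftrightarrow> t = 0 \<or> t = d - 1"
proof -
  have "t * n < d * n" using l ld by linarith
  then have td: "t < d" by simp
  have "l \<le> n \<longleftrightarrow> t = 0" using l r by (cases t) auto
  moreover have "d * n < l + n \<longleftrightarrow> d \<le> t + 1"
  proof
    assume "d * n < l + n"
    then have "d * n < (t + 2) * n" using l r by simp
    then show "d \<le> t + 1" by (simp only: mult_less_cancel2) simp
  next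
    assume "d \<le> t + 1"
    then have "d * n \<le> (t + 1) * n" by (rule mult_le_mono1)
    then show "d * n < l + n" using l by simp
  qed
  ultimately show ?thesis using td by auto
qed

theorem corollary2p11:
  fixes n d i j t :: nat
  assumes alg_closed: "\<forall>p :: 'k::field poly. degree p > 0 \<longrightarrow> (\<exists>x. poly p x = 0)"
    and "0 < n" and "0 < d"
    and "i < n" and "j < n"
    and "Mlen n i j t \<le> d * n + 1"
    and "\<not> projective n d (Mmod n i j t :: 'k rep)"
  shows "(stable_brick n d (Mmod n i j t :: 'k rep)
            \<longleftrightarrow> (ell (Mmod n i j t :: 'k rep) \<le> n
                 \<or> ((d - 1) * n + 1 \<le> ell (Mmod n i j t :: 'k rep) \<and> ell (Mmod n i j t :: 'k rep) \<le> d * n)))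
       \<and> ((ell (Mmod n i j t :: 'k rep) \<le> n
                 \<or> ((d - 1) * n + 1 \<le> ell (Mmod n i j t :: 'k rep) \<and> ell (Mmod n i j t :: 'k rep) \<le> d * n))
            \<longleftrightarrow> (t = 0 \<or> t = d - 1))"
proof -
  note n = assms(2) and d = assms(3) and i = assms(4)
  define l where "l = Mlen n i j t"
  have M: "(Mmod n i j t :: 'k rep) = uniserial n i l" by (simp add: Mmod_def l_def)
  have ell: "ell (uniserial n i l :: 'k rep) = l" by (simp add: ell_def)
  define r where "r = (j + n - i) mod n"
  have r: "r < n" using n by (simp add: r_def)
  have l_eq: "l = t * n + r + 1" by (simp add: l_def r_def Mlen_def)
  have ldn: "l \<le> d * n"
  proof (rule ccontr)
    assume "\<not> l \<le> d * n"
    then have "l = d * n + 1" using assms(6) l_def by simp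
    moreover have "projective n d (uniserial n i (d * n + 1) :: 'k rep)"
      by (rule projective_uniserial[OF n i])
    ultimately show False using assms(7) M by simp
  qed
  have brick: "stable_brick n d (uniserial n i l :: 'k rep) \<longleftrightarrow> l \<le> n \<or> d * n < l + n"
    by (rule stable_brick_uniserial_iff[OF n i _ ldn]) (simp add: l_eq)
  have "(d - 1) * n + 1 \<le> l \<longleftrightarrow> d * n < l + n" using d by (cases d) auto
  then show ?thesis
    unfolding M ell using brick length_window_iff[OF r l_eq ldn] ldn by auto
qed

end
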